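(* Let $\zeta\in\Omega_n$ have rank $2$. For $J\in\mathbb N_0$ let $\Pi_J$ be the orthogonal projection onto the eigenspace of $\mathcal A$ with eigenvalue $J$. Then $\|\Pi_J|\zeta\rangle\|^2=\det(\mathbb 1-\zeta^*\zeta)\big(\tfrac12\operatorname{tr}(\zeta^*\zeta)\big)^J(J+1)$.
   Context: Let $A_a,B_a$ ($a=1,\dots,n$) be $2n$ independent bosonic annihilation operators on the Fock space with vacuum $|0\rangle$: $[A_a,A_b^\dagger]=[B_a,B_b^\dagger]=\delta_{ab}$, all other commutators vanishing, $A_a|0\rangle=B_a|0\rangle=0$. Define $E_{ab}=A_a^\dagger A_b+B_a^\dagger B_b+\delta_{ab}$, $\widetilde F_{ab}=B_a^\dagger A_b^\dagger-A_a^\dagger B_b^\dagger$, $\widetilde F_z=\sum_{a,b}z_{ab}\widetilde F_{ab}$, and the total area operator $\mathcal A=\sum_a\tfrac12(E_{aa}-1)$. Let $\Omega_n=\{\zeta\in M_n(\mathbb C):\zeta^{\mathsf T}=-\zeta,\ \zeta^*\zeta<\mathbb 1\}$ and $|\zeta\rangle=\det(\mathbb 1-\zeta^*\zeta)^{1/2}\exp(\tfrac12\widetilde F_\zeta)|0\rangle$. *)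

theory Defs
  imports "HOL-Analysis.Analysis"
begin

definition adjoint_mat :: "complex^'n^'m \<Rightarrow> complex^'m^'n" where
  "adjoint_mat M = (\<chi> i j. cnj (M $ j $ i))"

definition herm_form :: "complex^'n^'n \<Rightarrow> complex^'n \<Rightarrow> complex" where
  "herm_form M x = (\<Sum>i\<in>UNIV. cnj (x $ i) * ((M *v x) $ i))"

definition loewner_less :: "complex^'n^'n \<Rightarrow> complex^'n^'n \<Rightarrow> bool" where
  "loewner_less M N \<longleftrightarrow> (\<forall>x. x \<noteq> 0 \<longrightarrow> Re (herm_form (N - M) x) > 0 \<and> Im (herm_form (N - M) x) = 0)"

definition Omega :: "(complex^'n^'n) set" where
  "Omega = {z. transpose z = - z \<and> loewner_less (adjoint_mat z ** z) (mat 1)}"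

datatype 'n mode = ModeA 'n | ModeB 'n

type_synonym 'n occ = "'n mode \<Rightarrow> nat"
text \<open>A state is given by its coefficients in the orthonormal occupation-number
  basis |m>.\<close>
type_synonym 'n state = "'n occ \<Rightarrow> complex"

definition vac :: "'n state" where
  "vac m = (if m = (\<lambda>_. 0) then 1 else 0)"

definition basis_vec :: "'n occ \<Rightarrow> 'n state" where
  "basis_vec k m = (if m = k then 1 else 0)"

text \<open>Creation operator: c^dagger |m - e_i> = sqrt(m_i) |m>.\<close>
definition cre :: "'n mode \<Rightarrow> 'n state \<Rightarrow> 'n state" where
  "cre i \<psi> m = (if m i > 0 then complex_of_real (sqrt (real (m i))) * \<psi> (m(i := m i - 1)) else 0)"

text \<open>Annihilation operator: c |m + e_i> = sqrt(m_i + 1) |m>.\<close>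
definition ann :: "'n mode \<Rightarrow> 'n state \<Rightarrow> 'n state" where
  "ann i \<psi> m = complex_of_real (sqrt (real (m i + 1))) * \<psi> (m(i := m i + 1))"

definition E_op :: "'n \<Rightarrow> 'n \<Rightarrow> 'n state \<Rightarrow> 'n state" where
  "E_op a b \<psi> = (\<lambda>m. cre (ModeA a) (ann (ModeA b) \<psi>) m + cre (ModeB a) (ann (ModeB b) \<psi>) m
                     + (if a = b then \<psi> m else 0))"

definition Ft_op :: "'n \<Rightarrow> 'n \<Rightarrow> 'n state \<Rightarrow> 'n state" where
  "Ft_op a b \<psi> = (\<lambda>m. cre (ModeB a) (cre (ModeA b) \<psi>) m - cre (ModeA a) (cre (ModeB b) \<psi>) m)"

definition Ft_z :: "complex^'n^'n \<Rightarrow> 'n state \<Rightarrow> 'n state" where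
  "Ft_z z \<psi> = (\<lambda>m. \<Sum>a\<in>UNIV. \<Sum>b\<in>UNIV. z $ a $ b * Ft_op a b \<psi> m)"

definition area_op :: "'n::finite state \<Rightarrow> 'n state" where
  "area_op \<psi> = (\<lambda>m. \<Sum>a\<in>UNIV. (1/2) * (E_op a a \<psi> m - \<psi> m))"

definition exp_apply :: "('n state \<Rightarrow> 'n state) \<Rightarrow> 'n state \<Rightarrow> 'n state" where
  "exp_apply X v = (\<lambda>m. \<Sum>k. (X ^^ k) v m / of_nat (fact k))"

definition coh_state :: "complex^'n::finite^'n \<Rightarrow> 'n state" where
  "coh_state z = (\<lambda>m. complex_of_real (sqrt (Re (det (mat 1 - adjoint_mat z ** z))))
      * exp_apply (\<lambda>\<psi> m'. (1/2) * Ft_z z \<psi> m') vac m)"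

text \<open>The occupation-number basis is an orthonormal basis diagonalising the area operator, so the
  projection keeps exactly the coefficients of basis vectors lying in that eigenspace.\<close>
definition area_proj :: "nat \<Rightarrow> 'n::finite state \<Rightarrow> 'n state" where
  "area_proj J \<psi> = (\<lambda>m. if area_op (basis_vec m) = (\<lambda>m'. of_nat J * basis_vec m m') then \<psi> m else 0)"

definition norm_sq :: "'n state \<Rightarrow> real" where
  "norm_sq \<psi> = infsum (\<lambda>m. (cmod (\<psi> m))\<^sup>2) UNIV"

end

theory Submission
  imports Defs
begin

text \<open>For antisymmetric \<open>z\<close>, \<open>F\<^sub>z / 2 = G\<close> with \<open>G = \<Sum>\<^sub>a\<^sub>b z\<^sub>a\<^sub>b B\<^sub>a\<^sup>\<dagger> A\<^sub>b\<^sup>\<dagger>\<close>, which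
  raises the total occupation number by two, while \<open>\<A>\<close> acts on occupation-number vectors as half
  their total occupation. Hence the projection onto \<open>\<A> = J\<close> keeps exactly the term
  \<open>G\<^sup>J|0\<rangle>/J!\<close> of the exponential. Its norm is computed by moving \<open>G\<^sup>\<dagger>\<close> through the powers of
  \<open>G\<close>: \<open>[G\<^sup>\<dagger>, G] = tr(z\<^sup>*z) + K\<close> with a quadratic hopping operator \<open>K\<close>, and \<open>[K, G]\<close> is again
  a pair creation operator, with matrix \<open>2 z z\<^sup>* z\<close>. An antisymmetric matrix of rank two has the
  form \<open>x y\<^sup>T - y x\<^sup>T\<close>, and then \<open>z z\<^sup>* z = \<lambda> z\<close> with \<open>\<lambda> = tr(z\<^sup>*z)/2\<close>. This gives
  \<open>G\<^sup>\<dagger> G\<^sup>J\<^sup>+\<^sup>1|0\<rangle> = \<lambda>(J+1)(J+2) G\<^sup>J|0\<rangle>\<close>, so \<open>\<parallel>G\<^sup>J|0\<rangle>\<parallel>\<^sup>2 = \<lambda>\<^sup>J J! (J+1)!\<close>.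
  Finally \<open>det(1 - z\<^sup>*z)\<close> is real and positive, because \<open>det(1 - t z\<^sup>*z)\<close> is real and cannot
  vanish for \<open>0 \<le> t \<le> 1\<close>.\<close>

section \<open>Occupation numbers\<close>

lemma UNIV_mode: "(UNIV :: 'n mode set) = range ModeA \<union> range ModeB"
  by (auto simp: image_iff) (metis mode.exhaust)

instance mode :: (finite) finite
  by standard (simp add: UNIV_mode)

definition total_occ :: "'n::finite occ \<Rightarrow> nat" where
  "total_occ m = sum m UNIV"

lemma total_occ_update: "total_occ (m(i := k)) + m i = total_occ m + k"
proof -
  have "total_occ m = m i + sum m (UNIV - {i})"
    unfolding total_occ_def by (rule sum.remove) auto
  moreover have "total_occ (m(i := k)) = k + sum (m(i := k)) (UNIV - {i})"
    unfolding total_occ_def by (subst sum.remove[of _ i]) auto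
  moreover have "sum (m(i := k)) (UNIV - {i}) = sum m (UNIV - {i})"
    by (rule sum.cong) auto
  ultimately show ?thesis by simp
qed

lemma total_occ_modes: "total_occ m = (\<Sum>a\<in>UNIV. m (ModeA a)) + (\<Sum>a\<in>UNIV. m (ModeB a))"
proof -
  have "total_occ m = sum m (range ModeA) + sum m (range ModeB)"
    unfolding total_occ_def UNIV_mode by (rule sum.union_disjoint) auto
  then show ?thesis
    by (simp add: sum.reindex inj_def)
qed

lemma total_occ_eq_0_iff: "total_occ m = 0 \<longleftrightarrow> m = (\<lambda>_. 0)"
  unfolding total_occ_def by (auto simp: fun_eq_iff)

lemma finite_total_occ: "finite {m :: 'n::finite occ. total_occ m = d}"
proof (rule finite_subset)
  show "{m :: 'n occ. total_occ m = d} \<subseteq> Pi\<^sub>E UNIV (\<lambda>_. {..d})"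
  proof
    fix m :: "'n occ"
    assume "m \<in> {m. total_occ m = d}"
    then have "m i \<le> d" for i
      unfolding total_occ_def using member_le_sum[of i UNIV m] by auto
    then show "m \<in> Pi\<^sub>E UNIV (\<lambda>_. {..d})" by (simp add: PiE_UNIV_domain)
  qed
qed (rule finite_PiE; simp)

definition homogeneous :: "nat \<Rightarrow> 'n::finite state \<Rightarrow> bool" where
  "homogeneous d \<psi> \<longleftrightarrow> (\<forall>m. total_occ m \<noteq> d \<longrightarrow> \<psi> m = 0)"

lemma homogeneous_vac: "homogeneous 0 vac"
  unfolding homogeneous_def vac_def total_occ_def by auto

lemma homogeneous_cre: "homogeneous d \<psi> \<Longrightarrow> homogeneous (Suc d) (cre i \<psi>)"
  unfolding homogeneous_def
proof (intro allI impI)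
  fix m :: "'a occ"
  assume hom: "\<forall>m. total_occ m \<noteq> d \<longrightarrow> \<psi> m = 0" and m: "total_occ m \<noteq> Suc d"
  show "cre i \<psi> m = 0"
  proof (cases "m i = 0")
    case False
    have "total_occ (m(i := m i - 1)) + m i = total_occ m + (m i - 1)"
      by (rule total_occ_update)
    then have "total_occ (m(i := m i - 1)) \<noteq> d" using m False by linarith
    then show ?thesis using hom by (simp add: cre_def)
  qed (simp add: cre_def)
qed

section \<open>Canonical commutation relations\<close>

lemma of_real_sqrt_square: "complex_of_real (sqrt (real k)) * (complex_of_real (sqrt (real k)) * x) = of_nat k * x"
  by (simp add: mult.assoc[symmetric] flip: of_real_mult)

lemma cre_commute: "cre i (cre j \<psi>) = cre j (cre i \<psi>)"
proof (rule ext)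
  fix m :: "'a occ"
  show "cre i (cre j \<psi>) m = cre j (cre i \<psi>) m"
  proof (cases "i = j")
    case False
    have twist: "m(i := m i - Suc 0, j := m j - Suc 0) = m(j := m j - Suc 0, i := m i - Suc 0)"
      using False by (rule fun_upd_twist)
    show ?thesis
      using False unfolding cre_def
      by (cases "0 < m j"; cases "0 < m i") (simp_all add: twist mult.left_commute)
  qed simp
qed

lemma ann_commute: "ann i (ann j \<psi>) = ann j (ann i \<psi>)"
proof (rule ext)
  fix m :: "'a occ"
  show "ann i (ann j \<psi>) m = ann j (ann i \<psi>) m"
  proof (cases "i = j")
    case False
    have twist: "m(i := Suc (m i), j := Suc (m j)) = m(j := Suc (m j), i := Suc (m i))"
      using False by (rule fun_upd_twist)
    show ?thesis
      using False unfolding ann_def by (simp add: twist mult.left_commute)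
  qed simp
qed

lemma cre_ann_self: "cre i (ann i \<psi>) m = of_nat (m i) * \<psi> m"
proof (cases "m i")
  case (Suc k)
  then have "m(i := Suc k) = m" by auto
  then show ?thesis using Suc of_real_sqrt_square[of "Suc k"] by (simp add: ann_def cre_def)
qed (simp add: cre_def)

lemma ann_cre: "ann i (cre j \<psi>) = (\<lambda>m. cre j (ann i \<psi>) m + (if i = j then \<psi> m else 0))"
proof (rule ext)
  fix m :: "'a occ"
  show "ann i (cre j \<psi>) m = cre j (ann i \<psi>) m + (if i = j then \<psi> m else 0)"
  proof (cases "i = j")
    case True
    have "ann j (cre j \<psi>) m = of_nat (Suc (m j)) * \<psi> m"
      using of_real_sqrt_square[of "Suc (m j)" "\<psi> m"] by (simp add: ann_def cre_def)
    then show ?thesis using True by (simp add: cre_ann_self algebra_simps)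
  next
    case False
    have twist: "m(i := Suc (m i), j := m j - Suc 0) = m(j := m j - Suc 0, i := Suc (m i))"
      using False by (rule fun_upd_twist)
    show ?thesis
      using False unfolding ann_def cre_def
      by (cases "0 < m j") (simp_all add: twist mult.left_commute)
  qed
qed

lemma ann_vac: "ann i vac = (\<lambda>m. 0)"
  by (rule ext) (auto simp: ann_def vac_def dest: fun_cong[of _ _ i])

lemma cre_zero: "cre i (\<lambda>m. 0) = (\<lambda>m. 0)"
  by (rule ext) (simp add: cre_def)

lemma ann_zero: "ann i (\<lambda>m. 0) = (\<lambda>m. 0)"
  by (rule ext) (simp add: ann_def)

lemma cre_add: "cre i (\<lambda>m. f m + g m) = (\<lambda>m. cre i f m + cre i g m)"
  by (rule ext) (simp add: cre_def algebra_simps)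

lemma ann_add: "ann i (\<lambda>m. f m + g m) = (\<lambda>m. ann i f m + ann i g m)"
  by (rule ext) (simp add: ann_def algebra_simps)

lemma cre_scale: "cre i (\<lambda>m. c * f m) = (\<lambda>m. c * cre i f m)"
  by (rule ext) (simp add: cre_def algebra_simps)

lemma ann_scale: "ann i (\<lambda>m. c * f m) = (\<lambda>m. c * ann i f m)"
  by (rule ext) (simp add: ann_def algebra_simps)

lemma cre_sum: "cre i (\<lambda>m. \<Sum>x\<in>A. f x m) = (\<lambda>m. \<Sum>x\<in>A. cre i (f x) m)"
  by (rule ext) (simp add: cre_def sum_distrib_left)

lemma ann_sum: "ann i (\<lambda>m. \<Sum>x\<in>A. f x m) = (\<lambda>m. \<Sum>x\<in>A. ann i (f x) m)"
  by (rule ext) (simp add: ann_def sum_distrib_left)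

lemma cre_if: "cre i (\<lambda>m. if P then f m else 0) = (\<lambda>m. if P then cre i f m else 0)"
  by (rule ext) (simp add: cre_def)

lemma ann_if: "ann i (\<lambda>m. if P then f m else 0) = (\<lambda>m. if P then ann i f m else 0)"
  by (rule ext) (simp add: ann_def)

section \<open>Pair creation and hopping operators\<close>

text \<open>\<open>pair_cre z\<close> is \<open>G\<close> and \<open>pair_ann z\<close> its adjoint \<open>G\<^sup>\<dagger>\<close>; \<open>hop_A M + hop_B N\<close> is a
  general quadratic hopping operator, of which \<open>K\<close> is the instance \<open>M = z\<^sup>*z\<close>, \<open>N = z z\<^sup>*\<close>.\<close>

definition pair_cre :: "complex^'n^'n \<Rightarrow> 'n::finite state \<Rightarrow> 'n state" where
  "pair_cre w \<psi> = (\<lambda>m. \<Sum>a\<in>UNIV. \<Sum>b\<in>UNIV. w$a$b * cre (ModeB a) (cre (ModeA b) \<psi>) m)"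

definition pair_ann :: "complex^'n^'n \<Rightarrow> 'n::finite state \<Rightarrow> 'n state" where
  "pair_ann w \<psi> = (\<lambda>m. \<Sum>a\<in>UNIV. \<Sum>b\<in>UNIV. cnj (w$a$b) * ann (ModeA b) (ann (ModeB a) \<psi>) m)"

definition hop_A :: "complex^'n^'n \<Rightarrow> 'n::finite state \<Rightarrow> 'n state" where
  "hop_A M \<psi> = (\<lambda>m. \<Sum>b\<in>UNIV. \<Sum>d\<in>UNIV. M$b$d * cre (ModeA d) (ann (ModeA b) \<psi>) m)"

definition hop_B :: "complex^'n^'n \<Rightarrow> 'n::finite state \<Rightarrow> 'n state" where
  "hop_B N \<psi> = (\<lambda>m. \<Sum>a\<in>UNIV. \<Sum>c\<in>UNIV. N$c$a * cre (ModeB c) (ann (ModeB a) \<psi>) m)"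

lemma pair_cre_zero: "pair_cre w (\<lambda>m. 0) = (\<lambda>m. 0)"
  unfolding pair_cre_def by (simp add: cre_zero)

lemma pair_cre_add: "pair_cre w (\<lambda>m. f m + g m) = (\<lambda>m. pair_cre w f m + pair_cre w g m)"
  unfolding pair_cre_def cre_add by (simp add: distrib_left sum.distrib)

lemma pair_cre_scale: "pair_cre w (\<lambda>m. c * f m) = (\<lambda>m. c * pair_cre w f m)"
  unfolding pair_cre_def cre_scale by (simp add: sum_distrib_left mult_ac)

lemma pair_cre_scaled_matrix:
  assumes "\<And>a b. w'$a$b = c * w$a$b"
  shows "pair_cre w' \<psi> m = c * pair_cre w \<psi> m"
  unfolding pair_cre_def assms by (simp add: sum_distrib_left mult.assoc)

lemma homogeneous_pair_cre:
  assumes "homogeneous d \<psi>"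
  shows "homogeneous (Suc (Suc d)) (pair_cre w \<psi>)"
proof -
  have "homogeneous (Suc (Suc d)) (cre (ModeB a) (cre (ModeA b) \<psi>))" for a b
    by (intro homogeneous_cre assms)
  then show ?thesis unfolding homogeneous_def pair_cre_def by simp
qed

lemma pair_ann_vac: "pair_ann w vac = (\<lambda>m. 0)"
  unfolding pair_ann_def by (simp add: ann_vac ann_zero)

lemma hop_A_vac: "hop_A M vac = (\<lambda>m. 0)"
  unfolding hop_A_def by (simp add: ann_vac cre_zero)

lemma hop_B_vac: "hop_B N vac = (\<lambda>m. 0)"
  unfolding hop_B_def by (simp add: ann_vac cre_zero)

lemma ann_ann_cre_cre:
  "ann (ModeA b) (ann (ModeB a) (cre (ModeB c) (cre (ModeA d) \<psi>))) =
   (\<lambda>m. cre (ModeB c) (cre (ModeA d) (ann (ModeA b) (ann (ModeB a) \<psi>))) m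
        + (if b = d then cre (ModeB c) (ann (ModeB a) \<psi>) m else 0)
        + (if a = c then cre (ModeA d) (ann (ModeA b) \<psi>) m else 0)
        + (if a = c \<and> b = d then \<psi> m else 0))"
proof -
  have inner: "ann (ModeB a) (cre (ModeB c) (cre (ModeA d) \<psi>)) =
     (\<lambda>m. cre (ModeB c) (cre (ModeA d) (ann (ModeB a) \<psi>)) m + (if a = c then cre (ModeA d) \<psi> m else 0))"
    by (simp add: ann_cre)
  show ?thesis
    unfolding inner ann_add ann_if
    by (rule ext) (simp add: ann_cre cre_add cre_if ann_commute[of "ModeA b"])
qed

lemma cre_ann_cre_cre_A:
  "cre (ModeA d) (ann (ModeA b) (cre (ModeB c) (cre (ModeA e) \<psi>))) =
   (\<lambda>m. cre (ModeB c) (cre (ModeA e) (cre (ModeA d) (ann (ModeA b) \<psi>))) m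
        + (if b = e then cre (ModeB c) (cre (ModeA d) \<psi>) m else 0))"
proof -
  have inner: "ann (ModeA b) (cre (ModeB c) (cre (ModeA e) \<psi>)) =
     (\<lambda>m. cre (ModeB c) (cre (ModeA e) (ann (ModeA b) \<psi>)) m + (if b = e then cre (ModeB c) \<psi> m else 0))"
    by (simp add: ann_cre cre_add cre_if)
  show ?thesis
    by (simp only: inner cre_add cre_if cre_commute[of "ModeA d" "ModeB c"] cre_commute[of "ModeA d" "ModeA e"])
qed

lemma cre_ann_cre_cre_B:
  "cre (ModeB c) (ann (ModeB a) (cre (ModeB e) (cre (ModeA d) \<psi>))) =
   (\<lambda>m. cre (ModeB e) (cre (ModeA d) (cre (ModeB c) (ann (ModeB a) \<psi>))) m
        + (if a = e then cre (ModeB c) (cre (ModeA d) \<psi>) m else 0))"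
proof -
  have inner: "ann (ModeB a) (cre (ModeB e) (cre (ModeA d) \<psi>)) =
     (\<lambda>m. cre (ModeB e) (cre (ModeA d) (ann (ModeB a) \<psi>)) m + (if a = e then cre (ModeA d) \<psi> m else 0))"
    by (simp add: ann_cre)
  show ?thesis
    by (simp only: inner cre_add cre_if cre_commute[of "ModeB c" "ModeB e"] cre_commute[of "ModeB c" "ModeA d"])
qed

lemma sum_if_eq_left:
  fixes g :: "'a::finite \<Rightarrow> 'b \<Rightarrow> 'c::comm_monoid_add"
  shows "(\<Sum>c\<in>UNIV. \<Sum>d\<in>D. if a = c then g c d else 0) = (\<Sum>d\<in>D. g a d)"
proof -
  have "(\<Sum>d\<in>D. if a = c then g c d else 0) = (if a = c then sum (g c) D else 0)" for c
    by simp
  then show ?thesis by simp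
qed

lemma sum_swap_outer_inner:
  "(\<Sum>a\<in>A. \<Sum>b\<in>B. \<Sum>c\<in>C. \<Sum>d\<in>D. f a b c d) = (\<Sum>c\<in>C. \<Sum>d\<in>D. \<Sum>a\<in>A. \<Sum>b\<in>B. f a b c d)"
proof -
  have "(\<Sum>a\<in>A. \<Sum>b\<in>B. \<Sum>c\<in>C. \<Sum>d\<in>D. f a b c d) = (\<Sum>a\<in>A. \<Sum>c\<in>C. \<Sum>b\<in>B. \<Sum>d\<in>D. f a b c d)"
    by (rule sum.cong[OF refl], rule sum.swap)
  also have "\<dots> = (\<Sum>c\<in>C. \<Sum>a\<in>A. \<Sum>b\<in>B. \<Sum>d\<in>D. f a b c d)" by (rule sum.swap)
  also have "\<dots> = (\<Sum>c\<in>C. \<Sum>a\<in>A. \<Sum>d\<in>D. \<Sum>b\<in>B. f a b c d)"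
    by (rule sum.cong[OF refl], rule sum.cong[OF refl], rule sum.swap)
  also have "\<dots> = (\<Sum>c\<in>C. \<Sum>d\<in>D. \<Sum>a\<in>A. \<Sum>b\<in>B. f a b c d)"
    by (rule sum.cong[OF refl], rule sum.swap)
  finally show ?thesis .
qed

lemma sum_rotate3:
  "(\<Sum>a\<in>A. \<Sum>b\<in>B. \<Sum>c\<in>C. f a b c) = (\<Sum>b\<in>B. \<Sum>c\<in>C. \<Sum>a\<in>A. f a b c)"
proof -
  have "(\<Sum>a\<in>A. \<Sum>b\<in>B. \<Sum>c\<in>C. f a b c) = (\<Sum>b\<in>B. \<Sum>a\<in>A. \<Sum>c\<in>C. f a b c)"
    by (rule sum.swap)
  also have "\<dots> = (\<Sum>b\<in>B. \<Sum>c\<in>C. \<Sum>a\<in>A. f a b c)"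
    by (rule sum.cong[OF refl], rule sum.swap)
  finally show ?thesis .
qed

lemma contract_adjoint_right:
  fixes w w' :: "complex^'n::finite^'n"
  shows "(\<Sum>a\<in>UNIV. \<Sum>b\<in>UNIV. \<Sum>c\<in>UNIV. \<Sum>d\<in>UNIV. if b = d then cnj (w$a$b) * w'$c$d * f a c else 0)
       = (\<Sum>a\<in>UNIV. \<Sum>c\<in>UNIV. (w' ** adjoint_mat w)$c$a * f a c)"
proof -
  have "(\<Sum>a\<in>UNIV. \<Sum>b\<in>UNIV. \<Sum>c\<in>UNIV. \<Sum>d\<in>UNIV. if b = d then cnj (w$a$b) * w'$c$d * f a c else 0)
      = (\<Sum>a\<in>UNIV. \<Sum>b\<in>UNIV. \<Sum>c\<in>UNIV. cnj (w$a$b) * w'$c$b * f a c)"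
    by simp
  also have "\<dots> = (\<Sum>a\<in>UNIV. \<Sum>c\<in>UNIV. \<Sum>b\<in>UNIV. cnj (w$a$b) * w'$c$b * f a c)"
    by (rule sum.cong[OF refl], rule sum.swap)
  finally show ?thesis
    by (simp add: matrix_matrix_mult_def adjoint_mat_def sum_distrib_left sum_distrib_right mult_ac)
qed

lemma contract_adjoint_left:
  fixes w w' :: "complex^'n::finite^'n"
  shows "(\<Sum>a\<in>UNIV. \<Sum>b\<in>UNIV. \<Sum>c\<in>UNIV. \<Sum>d\<in>UNIV. if a = c then cnj (w$a$b) * w'$c$d * f b d else 0)
       = (\<Sum>b\<in>UNIV. \<Sum>d\<in>UNIV. (adjoint_mat w ** w')$b$d * f b d)"
proof -
  have "(\<Sum>a\<in>UNIV. \<Sum>b\<in>UNIV. \<Sum>c\<in>UNIV. \<Sum>d\<in>UNIV. if a = c then cnj (w$a$b) * w'$c$d * f b d else 0)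
      = (\<Sum>b\<in>UNIV. \<Sum>a\<in>UNIV. \<Sum>d\<in>UNIV. cnj (w$a$b) * w'$a$d * f b d)"
    by (subst sum.swap) (simp only: sum_if_eq_left)
  also have "\<dots> = (\<Sum>b\<in>UNIV. \<Sum>d\<in>UNIV. \<Sum>a\<in>UNIV. cnj (w$a$b) * w'$a$d * f b d)"
    by (rule sum.cong[OF refl], rule sum.swap)
  finally show ?thesis
    by (simp add: matrix_matrix_mult_def adjoint_mat_def sum_distrib_right)
qed

lemma contract_trace:
  fixes w w' :: "complex^'n::finite^'n"
  shows "(\<Sum>a\<in>UNIV. \<Sum>b\<in>UNIV. \<Sum>c\<in>UNIV. \<Sum>d\<in>UNIV. if a = c \<and> b = d then cnj (w$a$b) * w'$c$d * x else 0)
       = trace (adjoint_mat w ** w') * x"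
proof -
  have nested: "(if a = c \<and> b = d then y else 0) = (if a = c then (if b = d then y else 0) else 0)"
    for a b c d and y :: complex
    by simp
  have "(\<Sum>a\<in>UNIV. \<Sum>b\<in>UNIV. \<Sum>c\<in>UNIV. \<Sum>d\<in>UNIV. if a = c \<and> b = d then cnj (w$a$b) * w'$c$d * x else 0)
      = (\<Sum>a\<in>UNIV. \<Sum>b\<in>UNIV. cnj (w$a$b) * w'$a$b * x)"
    by (simp only: nested sum_if_eq_left) simp
  also have "\<dots> = (\<Sum>b\<in>UNIV. \<Sum>a\<in>UNIV. cnj (w$a$b) * w'$a$b * x)"
    by (rule sum.swap)
  finally show ?thesis
    by (simp add: trace_def matrix_matrix_mult_def adjoint_mat_def sum_distrib_right)
qed

lemma pair_ann_pair_cre: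
  "pair_ann w (pair_cre w' \<psi>) m = pair_cre w' (pair_ann w \<psi>) m + trace (adjoint_mat w ** w') * \<psi> m
     + hop_A (adjoint_mat w ** w') \<psi> m + hop_B (w' ** adjoint_mat w) \<psi> m"
proof -
  let ?T = "\<lambda>a b c d. cre (ModeB c) (cre (ModeA d) (ann (ModeA b) (ann (ModeB a) \<psi>))) m"
  let ?TB = "\<lambda>a c. cre (ModeB c) (ann (ModeB a) \<psi>) m"
  let ?TA = "\<lambda>b d. cre (ModeA d) (ann (ModeA b) \<psi>) m"
  have "pair_ann w (pair_cre w' \<psi>) m = (\<Sum>a\<in>UNIV. \<Sum>b\<in>UNIV. \<Sum>c\<in>UNIV. \<Sum>d\<in>UNIV. cnj (w$a$b) * w'$c$d *
     (?T a b c d + (if b = d then ?TB a c else 0) + (if a = c then ?TA b d else 0)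
        + (if a = c \<and> b = d then \<psi> m else 0)))"
    unfolding pair_ann_def pair_cre_def ann_sum ann_scale ann_ann_cre_cre
    by (simp add: sum_distrib_left mult.assoc)
  also have "\<dots> = (\<Sum>a\<in>UNIV. \<Sum>b\<in>UNIV. \<Sum>c\<in>UNIV. \<Sum>d\<in>UNIV. cnj (w$a$b) * w'$c$d * ?T a b c d)
     + (\<Sum>a\<in>UNIV. \<Sum>b\<in>UNIV. \<Sum>c\<in>UNIV. \<Sum>d\<in>UNIV. if b = d then cnj (w$a$b) * w'$c$d * ?TB a c else 0)
     + (\<Sum>a\<in>UNIV. \<Sum>b\<in>UNIV. \<Sum>c\<in>UNIV. \<Sum>d\<in>UNIV. if a = c then cnj (w$a$b) * w'$c$d * ?TA b d else 0)
     + (\<Sum>a\<in>UNIV. \<Sum>b\<in>UNIV. \<Sum>c\<in>UNIV. \<Sum>d\<in>UNIV. if a = c \<and> b = d then cnj (w$a$b) * w'$c$d * \<psi> m else 0)"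
    by (simp only: distrib_left sum.distrib mult_zero_right if_distrib[of "\<lambda>x. _ * x"] cong: if_cong)
  also have "(\<Sum>a\<in>UNIV. \<Sum>b\<in>UNIV. \<Sum>c\<in>UNIV. \<Sum>d\<in>UNIV. cnj (w$a$b) * w'$c$d * ?T a b c d)
      = (\<Sum>c\<in>UNIV. \<Sum>d\<in>UNIV. \<Sum>a\<in>UNIV. \<Sum>b\<in>UNIV. cnj (w$a$b) * w'$c$d * ?T a b c d)"
    by (rule sum_swap_outer_inner)
  also have "\<dots> = pair_cre w' (pair_ann w \<psi>) m"
    unfolding pair_ann_def pair_cre_def cre_sum cre_scale by (simp only: sum_distrib_left mult_ac)
  finally show ?thesis
    unfolding contract_adjoint_right contract_adjoint_left contract_trace hop_A_def hop_B_def
    by (simp add: algebra_simps)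
qed

lemma hop_A_pair_cre:
  "hop_A M (pair_cre w \<psi>) m = pair_cre w (hop_A M \<psi>) m + pair_cre (w ** M) \<psi> m"
proof -
  let ?P = "\<lambda>b d c e. cre (ModeB c) (cre (ModeA e) (cre (ModeA d) (ann (ModeA b) \<psi>))) m"
  let ?Q = "\<lambda>c d. cre (ModeB c) (cre (ModeA d) \<psi>) m"
  have "hop_A M (pair_cre w \<psi>) m = (\<Sum>b\<in>UNIV. \<Sum>d\<in>UNIV. \<Sum>c\<in>UNIV. \<Sum>e\<in>UNIV.
      M$b$d * (w$c$e * (?P b d c e + (if b = e then ?Q c d else 0))))"
    unfolding hop_A_def pair_cre_def ann_sum ann_scale cre_sum cre_scale cre_ann_cre_cre_A
    by (simp add: sum_distrib_left)
  also have "\<dots> = (\<Sum>b\<in>UNIV. \<Sum>d\<in>UNIV. \<Sum>c\<in>UNIV. \<Sum>e\<in>UNIV. w$c$e * (M$b$d * ?P b d c e))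
      + (\<Sum>b\<in>UNIV. \<Sum>d\<in>UNIV. \<Sum>c\<in>UNIV. \<Sum>e\<in>UNIV. if b = e then M$b$d * w$c$e * ?Q c d else 0)"
    by (simp only: distrib_left sum.distrib mult_zero_right if_distrib[of "\<lambda>x. _ * x"] mult.assoc
        mult.left_commute[of "M$_$_"] cong: if_cong)
  also have "(\<Sum>b\<in>UNIV. \<Sum>d\<in>UNIV. \<Sum>c\<in>UNIV. \<Sum>e\<in>UNIV. w$c$e * (M$b$d * ?P b d c e))
      = (\<Sum>c\<in>UNIV. \<Sum>e\<in>UNIV. \<Sum>b\<in>UNIV. \<Sum>d\<in>UNIV. w$c$e * (M$b$d * ?P b d c e))"
    by (rule sum_swap_outer_inner)
  also have "\<dots> = pair_cre w (hop_A M \<psi>) m"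
    unfolding hop_A_def pair_cre_def cre_sum cre_scale by (simp only: sum_distrib_left)
  also have "(\<Sum>b\<in>UNIV. \<Sum>d\<in>UNIV. \<Sum>c\<in>UNIV. \<Sum>e\<in>UNIV. if b = e then M$b$d * w$c$e * ?Q c d else 0)
      = (\<Sum>b\<in>UNIV. \<Sum>d\<in>UNIV. \<Sum>c\<in>UNIV. M$b$d * w$c$b * ?Q c d)"
    by simp
  also have "\<dots> = (\<Sum>d\<in>UNIV. \<Sum>c\<in>UNIV. \<Sum>b\<in>UNIV. M$b$d * w$c$b * ?Q c d)"
    by (rule sum_rotate3)
  also have "\<dots> = (\<Sum>c\<in>UNIV. \<Sum>d\<in>UNIV. \<Sum>b\<in>UNIV. M$b$d * w$c$b * ?Q c d)"
    by (rule sum.swap)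
  also have "\<dots> = pair_cre (w ** M) \<psi> m"
    unfolding pair_cre_def matrix_matrix_mult_def vec_lambda_beta sum_distrib_right
    by (simp only: mult.commute[of "M$_$_"])
  finally show ?thesis .
qed

lemma hop_B_pair_cre:
  "hop_B N (pair_cre w \<psi>) m = pair_cre w (hop_B N \<psi>) m + pair_cre (N ** w) \<psi> m"
proof -
  let ?P = "\<lambda>a c e d. cre (ModeB e) (cre (ModeA d) (cre (ModeB c) (ann (ModeB a) \<psi>))) m"
  let ?Q = "\<lambda>c d. cre (ModeB c) (cre (ModeA d) \<psi>) m"
  have "hop_B N (pair_cre w \<psi>) m = (\<Sum>a\<in>UNIV. \<Sum>c\<in>UNIV. \<Sum>e\<in>UNIV. \<Sum>d\<in>UNIV.
      N$c$a * (w$e$d * (?P a c e d + (if a = e then ?Q c d else 0))))"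
    unfolding hop_B_def pair_cre_def ann_sum ann_scale cre_sum cre_scale cre_ann_cre_cre_B
    by (simp add: sum_distrib_left)
  also have "\<dots> = (\<Sum>a\<in>UNIV. \<Sum>c\<in>UNIV. \<Sum>e\<in>UNIV. \<Sum>d\<in>UNIV. w$e$d * (N$c$a * ?P a c e d))
      + (\<Sum>a\<in>UNIV. \<Sum>c\<in>UNIV. \<Sum>e\<in>UNIV. \<Sum>d\<in>UNIV. if a = e then N$c$a * w$e$d * ?Q c d else 0)"
    by (simp only: distrib_left sum.distrib mult_zero_right if_distrib[of "\<lambda>x. _ * x"] mult.assoc
        mult.left_commute[of "N$_$_"] cong: if_cong)
  also have "(\<Sum>a\<in>UNIV. \<Sum>c\<in>UNIV. \<Sum>e\<in>UNIV. \<Sum>d\<in>UNIV. w$e$d * (N$c$a * ?P a c e d))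
      = (\<Sum>e\<in>UNIV. \<Sum>d\<in>UNIV. \<Sum>a\<in>UNIV. \<Sum>c\<in>UNIV. w$e$d * (N$c$a * ?P a c e d))"
    by (rule sum_swap_outer_inner)
  also have "\<dots> = pair_cre w (hop_B N \<psi>) m"
    unfolding hop_B_def pair_cre_def cre_sum cre_scale by (simp only: sum_distrib_left)
  also have "(\<Sum>a\<in>UNIV. \<Sum>c\<in>UNIV. \<Sum>e\<in>UNIV. \<Sum>d\<in>UNIV. if a = e then N$c$a * w$e$d * ?Q c d else 0)
      = (\<Sum>a\<in>UNIV. \<Sum>c\<in>UNIV. \<Sum>d\<in>UNIV. N$c$a * w$a$d * ?Q c d)"
    by (simp only: sum_if_eq_left)
  also have "\<dots> = (\<Sum>c\<in>UNIV. \<Sum>d\<in>UNIV. \<Sum>a\<in>UNIV. N$c$a * w$a$d * ?Q c d)"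
    by (rule sum_rotate3)
  also have "\<dots> = pair_cre (N ** w) \<psi> m"
    unfolding pair_cre_def matrix_matrix_mult_def vec_lambda_beta sum_distrib_right ..
  finally show ?thesis .
qed

section \<open>Powers of a pair creation operator on the vacuum\<close>

text \<open>By \<open>hop_A_pair_cre\<close> and \<open>hop_B_pair_cre\<close>, \<open>[K, G]\<close> is the pair creation operator with
  matrix \<open>z z\<^sup>*z + z z\<^sup>*z = 2\<lambda> z\<close>, and \<open>K\<close> kills the vacuum.\<close>

lemma hop_pair_cre_pow:
  assumes cubic: "\<And>a b. (z ** adjoint_mat z ** z)$a$b = lam * z$a$b"
  shows "(\<lambda>m. hop_A (adjoint_mat z ** z) ((pair_cre z ^^ J) vac) m + hop_B (z ** adjoint_mat z) ((pair_cre z ^^ J) vac) m)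
       = (\<lambda>m. 2 * lam * of_nat J * (pair_cre z ^^ J) vac m)"
proof (induction J)
  case 0
  show ?case by (simp add: hop_A_vac hop_B_vac)
next
  case (Suc J)
  let ?v = "(pair_cre z ^^ J) vac"
  have cubic': "(z ** (adjoint_mat z ** z))$a$b = lam * z$a$b" for a b
    using cubic by (simp add: matrix_mul_assoc)
  have "hop_A (adjoint_mat z ** z) (pair_cre z ?v) m + hop_B (z ** adjoint_mat z) (pair_cre z ?v) m
      = pair_cre z (\<lambda>m. hop_A (adjoint_mat z ** z) ?v m + hop_B (z ** adjoint_mat z) ?v m) m
        + 2 * lam * pair_cre z ?v m" for m
    unfolding hop_A_pair_cre hop_B_pair_cre pair_cre_add
      pair_cre_scaled_matrix[OF cubic] pair_cre_scaled_matrix[OF cubic']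
    by simp
  then show ?case
    unfolding Suc.IH pair_cre_scale by (simp add: algebra_simps)
qed

lemma pair_ann_pair_cre_pow:
  assumes cubic: "\<And>a b. (z ** adjoint_mat z ** z)$a$b = lam * z$a$b"
    and trace: "trace (adjoint_mat z ** z) = 2 * lam"
  shows "pair_ann z ((pair_cre z ^^ Suc J) vac)
       = (\<lambda>m. lam * of_nat (Suc J) * of_nat (Suc (Suc J)) * (pair_cre z ^^ J) vac m)"
proof (induction J)
  case 0
  show ?case
    by (rule ext) (simp add: pair_ann_pair_cre pair_ann_vac pair_cre_zero trace hop_A_vac hop_B_vac)
next
  case (Suc J)
  let ?v = "(pair_cre z ^^ Suc J) vac"
  have "pair_ann z (pair_cre z ?v) m = pair_cre z (pair_ann z ?v) m + 2 * lam * ?v m + 2 * lam * of_nat (Suc J) * ?v m"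
    for m
    using fun_cong[OF hop_pair_cre_pow[OF cubic, of "Suc J"], of m]
    by (simp add: pair_ann_pair_cre trace add.assoc)
  then show ?case
    unfolding Suc.IH pair_cre_scale by (simp add: fun_eq_iff algebra_simps)
qed

lemma homogeneous_pair_cre_pow: "homogeneous (2 * k) ((pair_cre w ^^ k) vac)"
  by (induction k) (simp_all add: homogeneous_vac homogeneous_pair_cre)

section \<open>The inner product on a fixed total occupation\<close>

definition inner_occ :: "nat \<Rightarrow> 'n::finite state \<Rightarrow> 'n state \<Rightarrow> complex" where
  "inner_occ d \<psi> \<phi> = (\<Sum>m\<in>{m. total_occ m = d}. cnj (\<psi> m) * \<phi> m)"

lemma inner_occ_sum_left: "inner_occ d (\<lambda>m. \<Sum>x\<in>A. f x m) \<phi> = (\<Sum>x\<in>A. inner_occ d (f x) \<phi>)"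
  unfolding inner_occ_def by (simp add: cnj_sum sum_distrib_right sum.swap[of _ "{m. total_occ m = d}"])

lemma inner_occ_sum_right: "inner_occ d \<phi> (\<lambda>m. \<Sum>x\<in>A. f x m) = (\<Sum>x\<in>A. inner_occ d \<phi> (f x))"
  unfolding inner_occ_def by (simp add: sum_distrib_left sum.swap[of _ "{m. total_occ m = d}"])

lemma inner_occ_scale_left: "inner_occ d (\<lambda>m. c * f m) \<phi> = cnj c * inner_occ d f \<phi>"
  unfolding inner_occ_def by (simp add: sum_distrib_left mult.assoc)

lemma inner_occ_scale_right: "inner_occ d \<phi> (\<lambda>m. c * f m) = c * inner_occ d \<phi> f"
  unfolding inner_occ_def by (simp add: sum_distrib_left mult_ac)

lemma inner_occ_vac: "inner_occ 0 vac vac = 1"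
proof -
  have "{m :: 'a occ. total_occ m = 0} = {\<lambda>_. 0}"
    using total_occ_eq_0_iff by auto
  then show ?thesis unfolding inner_occ_def by (simp add: vac_def)
qed

lemma inner_occ_cre: "inner_occ (Suc d) (cre i \<psi>) \<phi> = inner_occ d \<psi> (ann i \<phi>)"
proof -
  let ?S = "{m :: 'a occ. total_occ m = Suc d}"
  let ?g = "\<lambda>m. complex_of_real (sqrt (real (m i))) * cnj (\<psi> (m(i := m i - 1))) * \<phi> m"
  have "inner_occ (Suc d) (cre i \<psi>) \<phi> = (\<Sum>m\<in>?S. if 0 < m i then ?g m else 0)"
    unfolding inner_occ_def cre_def by (rule sum.cong) auto
  also have "\<dots> = (\<Sum>m\<in>{m\<in>?S. 0 < m i}. ?g m)"
    by (rule sum.inter_filter[symmetric]) (rule finite_total_occ)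
  also have "\<dots> = (\<Sum>m\<in>{m. total_occ m = d}. cnj (\<psi> m) * ann i \<phi> m)"
  proof (rule sum.reindex_bij_witness[where i = "\<lambda>m. m(i := m i + 1)" and j = "\<lambda>m. m(i := m i - 1)"])
    fix a :: "'a occ"
    assume a: "a \<in> {m \<in> ?S. 0 < m i}"
    show "a(i := a i - 1, i := (a(i := a i - 1)) i + 1) = a" using a by auto
    have "total_occ (a(i := a i - 1)) + a i = total_occ a + (a i - 1)" by (rule total_occ_update)
    then show "a(i := a i - 1) \<in> {m. total_occ m = d}" using a by auto
    show "cnj (\<psi> (a(i := a i - 1))) * ann i \<phi> (a(i := a i - 1)) = ?g a"
      using a by (simp add: ann_def mult_ac)
  next
    fix b :: "'a occ"
    assume b: "b \<in> {m. total_occ m = d}"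
    show "b(i := b i + 1, i := (b(i := b i + 1)) i - 1) = b" by auto
    have "total_occ (b(i := b i + 1)) + b i = total_occ b + (b i + 1)" by (rule total_occ_update)
    then show "b(i := b i + 1) \<in> {m \<in> ?S. 0 < m i}" using b by auto
  qed
  finally show ?thesis unfolding inner_occ_def .
qed

lemma inner_occ_pair_cre: "inner_occ (Suc (Suc d)) (pair_cre w \<psi>) \<phi> = inner_occ d \<psi> (pair_ann w \<phi>)"
  unfolding pair_cre_def pair_ann_def inner_occ_sum_left inner_occ_sum_right inner_occ_scale_left
    inner_occ_scale_right inner_occ_cre
  by (simp add: ann_commute)

lemma inner_occ_pair_cre_pow:
  assumes cubic: "\<And>a b. (z ** adjoint_mat z ** z)$a$b = lam * z$a$b"
    and trace: "trace (adjoint_mat z ** z) = 2 * lam"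
  shows "inner_occ (2 * J) ((pair_cre z ^^ J) vac) ((pair_cre z ^^ J) vac)
       = lam ^ J * of_nat (fact J) * of_nat (fact (Suc J))"
proof (induction J)
  case 0
  show ?case by (simp add: inner_occ_vac)
next
  case (Suc J)
  have "inner_occ (2 * Suc J) ((pair_cre z ^^ Suc J) vac) ((pair_cre z ^^ Suc J) vac)
      = inner_occ (2 * J) ((pair_cre z ^^ J) vac) (pair_ann z ((pair_cre z ^^ Suc J) vac))"
    by (simp add: inner_occ_pair_cre)
  also have "\<dots> = lam * of_nat (Suc J) * of_nat (Suc (Suc J))
      * inner_occ (2 * J) ((pair_cre z ^^ J) vac) ((pair_cre z ^^ J) vac)"
    unfolding pair_ann_pair_cre_pow[OF cubic trace] inner_occ_scale_right ..
  finally show ?case unfolding Suc.IH by (simp add: algebra_simps)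
qed

section \<open>The coherent state and the area operator\<close>

lemma half_Ft_z_eq_pair_cre:
  assumes anti: "\<And>a b. z$b$a = - z$a$b"
  shows "(\<lambda>\<psi> m. (1/2) * Ft_z z \<psi> m) = pair_cre z"
proof (intro ext)
  fix \<psi> :: "'a state" and m
  have "(\<Sum>a\<in>UNIV. \<Sum>b\<in>UNIV. z$a$b * cre (ModeA a) (cre (ModeB b) \<psi>) m)
      = (\<Sum>b\<in>UNIV. \<Sum>a\<in>UNIV. z$a$b * cre (ModeA a) (cre (ModeB b) \<psi>) m)"
    by (rule sum.swap)
  also have "\<dots> = (\<Sum>b\<in>UNIV. \<Sum>a\<in>UNIV. - (z$b$a * cre (ModeB b) (cre (ModeA a) \<psi>) m))"
  proof (intro sum.cong refl)
    fix a b
    show "z$a$b * cre (ModeA a) (cre (ModeB b) \<psi>) m = - (z$b$a * cre (ModeB b) (cre (ModeA a) \<psi>) m)"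
      unfolding anti[of b a] cre_commute[of "ModeA a" "ModeB b"] by simp
  qed
  also have "\<dots> = - pair_cre z \<psi> m"
    unfolding pair_cre_def by (simp add: sum_negf)
  finally show "(1/2) * Ft_z z \<psi> m = pair_cre z \<psi> m"
    unfolding Ft_z_def Ft_op_def by (simp add: right_diff_distrib sum_subtractf pair_cre_def)
qed

lemma exp_apply_half_Ft_z:
  assumes anti: "\<And>a b. z$b$a = - z$a$b" and m: "total_occ m = 2 * J"
  shows "exp_apply (\<lambda>\<psi> m'. (1/2) * Ft_z z \<psi> m') vac m = (pair_cre z ^^ J) vac m / of_nat (fact J)"
proof -
  have "(\<lambda>k. (pair_cre z ^^ k) vac m / of_nat (fact k))
      = (\<lambda>k. if k = J then (pair_cre z ^^ J) vac m / of_nat (fact J) else 0)"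
  proof
    fix k
    show "(pair_cre z ^^ k) vac m / of_nat (fact k) = (if k = J then (pair_cre z ^^ J) vac m / of_nat (fact J) else 0)"
      using homogeneous_pair_cre_pow[of k z] m unfolding homogeneous_def by auto
  qed
  then have "(\<lambda>k. (pair_cre z ^^ k) vac m / of_nat (fact k)) sums ((pair_cre z ^^ J) vac m / of_nat (fact J))"
    using sums_single[of J "\<lambda>_. (pair_cre z ^^ J) vac m / of_nat (fact J)"] by simp
  then show ?thesis
    unfolding exp_apply_def half_Ft_z_eq_pair_cre[OF anti] by (simp add: sums_iff)
qed

lemma coh_state_eq:
  assumes anti: "\<And>a b. z$b$a = - z$a$b" and m: "total_occ m = 2 * J"
  shows "coh_state z m = complex_of_real (sqrt (Re (det (mat 1 - adjoint_mat z ** z))))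
           * ((pair_cre z ^^ J) vac m / of_nat (fact J))"
  using exp_apply_half_Ft_z[OF anti m] by (simp add: coh_state_def)

lemma area_op_basis_vec: "area_op (basis_vec k) = (\<lambda>m. of_nat (total_occ m) / 2 * basis_vec k m)"
proof (rule ext)
  fix m :: "'a occ"
  have "area_op (basis_vec k) m
      = (\<Sum>a\<in>UNIV. (1/2) * (of_nat (m (ModeA a)) + of_nat (m (ModeB a))) * basis_vec k m)"
    unfolding area_op_def E_op_def by (simp add: cre_ann_self algebra_simps)
  also have "\<dots> = (1/2) * of_nat (total_occ m) * basis_vec k m"
    unfolding total_occ_modes of_nat_add of_nat_sum
    by (simp only: sum_distrib_right[symmetric] sum_distrib_left[symmetric] sum.distrib)
  finally show "area_op (basis_vec k) m = of_nat (total_occ m) / 2 * basis_vec k m" by simp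
qed

lemma area_proj_eq: "area_proj J \<psi> m = (if total_occ m = 2 * J then \<psi> m else 0)"
proof -
  have "area_op (basis_vec m) = (\<lambda>m'. of_nat J * basis_vec m m') \<longleftrightarrow> total_occ m = 2 * J"
  proof
    assume "area_op (basis_vec m) = (\<lambda>m'. of_nat J * basis_vec m m')"
    then have "of_nat (total_occ m) / 2 * basis_vec m m = (of_nat J :: complex) * basis_vec m m"
      unfolding area_op_basis_vec by (rule fun_cong)
    then have "(of_nat (total_occ m) :: complex) = of_nat (2 * J)"
      by (simp add: basis_vec_def field_simps)
    then show "total_occ m = 2 * J" by (simp only: of_nat_eq_iff)
  next
    assume "total_occ m = 2 * J"
    then show "area_op (basis_vec m) = (\<lambda>m'. of_nat J * basis_vec m m')"
      unfolding area_op_basis_vec by (auto simp: basis_vec_def)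
  qed
  then show ?thesis unfolding area_proj_def by simp
qed

lemma fact_square_cancel:
  "(x :: 'a::field_char_0) / (fact J)\<^sup>2 * (y * of_nat (fact J) * of_nat (fact (Suc J))) = x * y * of_nat (J + 1)"
proof -
  have "x / (fact J)\<^sup>2 * (y * of_nat (fact J) * of_nat (fact (Suc J)))
      = x * y * of_nat (J + 1) * (fact J * fact J / (fact J * fact J))"
    by (simp add: fact_Suc power2_eq_square algebra_simps)
  then show ?thesis by simp
qed

lemma norm_sq_area_proj: "norm_sq (area_proj J \<psi>) = (\<Sum>m | total_occ m = 2 * J. (cmod (\<psi> m))\<^sup>2)"
proof -
  have "norm_sq (area_proj J \<psi>) = infsum (\<lambda>m. (cmod (area_proj J \<psi> m))\<^sup>2) {m. total_occ m = 2 * J}"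
    unfolding norm_sq_def by (rule infsum_cong_neutral) (auto simp: area_proj_eq)
  also have "\<dots> = (\<Sum>m | total_occ m = 2 * J. (cmod (area_proj J \<psi> m))\<^sup>2)"
    by (rule infsum_finite) (rule finite_total_occ)
  finally show ?thesis
    by (simp add: area_proj_eq)
qed

lemma norm_sq_area_proj_coh_state:
  assumes anti: "\<And>a b. z$b$a = - z$a$b"
    and cubic: "\<And>a b. (z ** adjoint_mat z ** z)$a$b = lam * z$a$b"
    and trace: "trace (adjoint_mat z ** z) = 2 * lam"
    and det_real: "Im (det (mat 1 - adjoint_mat z ** z)) = 0"
    and det_nonneg: "Re (det (mat 1 - adjoint_mat z ** z)) \<ge> 0"
  shows "complex_of_real (norm_sq (area_proj J (coh_state z)))
       = det (mat 1 - adjoint_mat z ** z) * lam ^ J * of_nat (J + 1)"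
proof -
  let ?D = "det (mat 1 - adjoint_mat z ** z)"
  let ?v = "(pair_cre z ^^ J) vac"
  let ?S = "{m :: 'a occ. total_occ m = 2 * J}"
  have "norm_sq (area_proj J (coh_state z)) = (\<Sum>m\<in>?S. Re ?D * (cmod (?v m))\<^sup>2 / (fact J)\<^sup>2)"
    unfolding norm_sq_area_proj using det_nonneg
    by (intro sum.cong) (simp_all add: coh_state_eq[OF anti] norm_mult norm_divide power_mult_distrib power_divide)
  then have "complex_of_real (norm_sq (area_proj J (coh_state z)))
      = complex_of_real (Re ?D) / (fact J)\<^sup>2 * complex_of_real (\<Sum>m\<in>?S. (cmod (?v m))\<^sup>2)"
    by (simp add: sum_distrib_left sum_divide_distrib)
  also have "complex_of_real (\<Sum>m\<in>?S. (cmod (?v m))\<^sup>2) = inner_occ (2 * J) ?v ?v"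
    unfolding inner_occ_def of_real_sum complex_norm_square by (simp add: mult.commute)
  also have "complex_of_real (Re ?D) = ?D"
    using det_real by (simp add: complex_eq_iff)
  also have "?D / (fact J)\<^sup>2 * inner_occ (2 * J) ?v ?v = ?D * lam ^ J * of_nat (J + 1)"
    unfolding inner_occ_pair_cre_pow[OF cubic trace] by (rule fact_square_cancel)
  finally show ?thesis .
qed

section \<open>Antisymmetric matrices of rank two\<close>

lemma antisymmetric_rank2_wedge:
  fixes z :: "complex^'n::finite^'n"
  assumes anti: "\<And>a b. z$b$a = - z$a$b" and rank: "rank z = 2"
  obtains x y where "\<And>i j. z$i$j = x i * y j - y i * x j"
proof -
  obtain B where B: "B \<subseteq> rows z" "vec.independent B" "rows z \<subseteq> vec.span B" "card B = vec.dim (rows z)"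
    by (rule vec.basis_exists)
  then have "card B = 2" using rank by (simp add: row_rank_def_gen)
  then obtain u w where uw: "B = {u, w}" by (auto simp: card_2_iff)
  obtain p where p: "u = row p z" using B(1) uw by (auto simp: rows_def)
  obtain q where q: "w = row q z" using B(1) uw by (auto simp: rows_def)
  have "\<exists>k l. row i z = k *s u + l *s w" for i
  proof -
    have "row i z \<in> vec.span {u, w}" using B(3) uw by (auto simp: rows_def)
    then obtain k where "row i z - k *s u \<in> vec.span {w}"
      using vec.span_breakdown_eq[of "row i z" u "{w}"] by blast
    then obtain l where "row i z - k *s u = l *s w" using vec.span_singleton[of w] by auto
    then show ?thesis by (metis diff_add_cancel add.commute)
  qed
  then obtain \<alpha> \<beta> where \<alpha>\<beta>: "\<And>i. row i z = \<alpha> i *s u + \<beta> i *s w" by metis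
  have rows: "z$i$j = \<alpha> i * z$p$j + \<beta> i * z$q$j" for i j
    using arg_cong[OF \<alpha>\<beta>[of i], of "\<lambda>v. v$j"] by (simp add: p q row_def)
  have diag: "z$i$i = 0" for i
    using anti[of i i] by simp
  text \<open>Antisymmetry turns the rows \<open>p\<close> and \<open>q\<close> into multiples of the coefficient vectors.\<close>
  have row_p: "z$p$j = \<beta> j * z$p$q" for j
    using anti[of p j] anti[of p q] rows[of j p] diag[of p] by simp
  have row_q: "z$q$j = - (\<alpha> j * z$p$q)" for j
    using anti[of q j] rows[of j q] diag[of q] by simp
  show ?thesis
  proof
    show "z$i$j = (z$p$q * \<alpha> i) * \<beta> j - \<beta> i * (z$p$q * \<alpha> j)" for i j
      using rows[of i j] row_p[of j] row_q[of j] by (simp add: algebra_simps)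
  qed
qed

definition cinner :: "('n::finite \<Rightarrow> complex) \<Rightarrow> ('n \<Rightarrow> complex) \<Rightarrow> complex" where
  "cinner x y = (\<Sum>k\<in>UNIV. cnj (x k) * y k)"

lemma adjoint_mul_wedge:
  fixes z :: "complex^'n::finite^'n"
  assumes wedge: "\<And>i j. z$i$j = x i * y j - y i * x j"
  shows "(adjoint_mat z ** z)$b$d = cnj (y b) * y d * cinner x x - cnj (y b) * x d * cinner x y
           - cnj (x b) * y d * cinner y x + cnj (x b) * x d * cinner y y"
proof -
  have "(adjoint_mat z ** z)$b$d = (\<Sum>a\<in>UNIV. cnj (z$a$b) * z$a$d)"
    by (simp add: matrix_matrix_mult_def adjoint_mat_def)
  also have "\<dots> = (\<Sum>a\<in>UNIV. cnj (y b) * y d * (cnj (x a) * x a) - cnj (y b) * x d * (cnj (x a) * y a)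
         - cnj (x b) * y d * (cnj (y a) * x a) + cnj (x b) * x d * (cnj (y a) * y a))"
    by (rule sum.cong) (simp_all add: wedge algebra_simps)
  finally show ?thesis
    unfolding cinner_def by (simp only: sum.distrib sum_subtractf sum_distrib_left)
qed

lemma trace_adjoint_mul_wedge:
  fixes z :: "complex^'n::finite^'n"
  assumes wedge: "\<And>i j. z$i$j = x i * y j - y i * x j"
  shows "trace (adjoint_mat z ** z) = 2 * (cinner x x * cinner y y - cinner x y * cinner y x)"
proof -
  have "trace (adjoint_mat z ** z) = (\<Sum>b\<in>UNIV. cinner x x * (cnj (y b) * y b) - cinner x y * (cnj (y b) * x b)
      - cinner y x * (cnj (x b) * y b) + cinner y y * (cnj (x b) * x b))"
    unfolding trace_def by (rule sum.cong) (simp_all add: adjoint_mul_wedge[OF wedge] algebra_simps)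
  also have "\<dots> = cinner x x * cinner y y - cinner x y * cinner y x - cinner y x * cinner x y + cinner y y * cinner x x"
    unfolding cinner_def by (simp only: sum.distrib sum_subtractf sum_distrib_left)
  finally show ?thesis by (simp add: algebra_simps)
qed

lemma wedge_cubic:
  fixes z :: "complex^'n::finite^'n"
  assumes wedge: "\<And>i j. z$i$j = x i * y j - y i * x j"
  shows "(z ** adjoint_mat z ** z)$c$d = (cinner x x * cinner y y - cinner x y * cinner y x) * z$c$d"
proof -
  let ?M = "adjoint_mat z ** z"
  let ?g = "cinner x x * cinner y y - cinner x y * cinner y x"
  have contract: "(\<Sum>b\<in>UNIV. v b * ?M$b$d) = (y d * cinner x x - x d * cinner x y) * cinner y v
      - (y d * cinner y x - x d * cinner y y) * cinner x v" for v :: "'n \<Rightarrow> complex"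
  proof -
    have "(\<Sum>b\<in>UNIV. v b * ?M$b$d) = (\<Sum>b\<in>UNIV. (y d * cinner x x - x d * cinner x y) * (cnj (y b) * v b)
        - (y d * cinner y x - x d * cinner y y) * (cnj (x b) * v b))"
      by (rule sum.cong) (simp_all add: adjoint_mul_wedge[OF wedge] algebra_simps)
    then show ?thesis
      unfolding cinner_def by (simp only: sum_subtractf sum_distrib_left)
  qed
  have "(z ** ?M)$c$d = x c * (\<Sum>b\<in>UNIV. y b * ?M$b$d) - y c * (\<Sum>b\<in>UNIV. x b * ?M$b$d)"
    by (simp add: matrix_matrix_mult_def wedge sum_distrib_left sum_subtractf[symmetric] algebra_simps)
  also have "\<dots> = ?g * z$c$d"
    unfolding contract wedge cinner_def by (simp add: algebra_simps)
  finally show ?thesis by (simp add: matrix_mul_assoc)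
qed

section \<open>Positivity of the determinant\<close>

lemma det_adjoint_mat: "det (adjoint_mat (A :: complex^'n::finite^'n)) = cnj (det A)"
proof -
  have "adjoint_mat A = transpose (\<chi> i j. cnj (A$i$j))"
    by (simp add: adjoint_mat_def transpose_def vec_eq_iff)
  then have "det (adjoint_mat A) = det ((\<chi> i j. cnj (A$i$j)) :: complex^'n^'n)"
    by (simp add: det_transpose)
  also have "\<dots> = cnj (det A)"
    unfolding det_def by (simp add: cnj_sum cnj_prod)
  finally show ?thesis .
qed

lemma det_real_if_self_adjoint: "adjoint_mat A = A \<Longrightarrow> Im (det A) = 0"
  using det_adjoint_mat[of A] by (simp add: complex_eq_iff)

lemma det_nonzero_if_positive_definite:
  fixes A :: "complex^'n::finite^'n"
  assumes pos: "\<And>x. x \<noteq> 0 \<Longrightarrow> Re (herm_form A x) > 0"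
  shows "det A \<noteq> 0"
proof
  assume "det A = 0"
  then have "\<not> inj ((*v) A)"
    using det_nz_iff_inj_gen[OF matrix_vector_mul_linear_gen, of A] by simp
  then obtain a b where ab: "a \<noteq> b" "A *v a = A *v b" unfolding inj_def by blast
  then have "herm_form A (a - b) = 0"
    by (simp add: herm_form_def matrix_vector_mult_diff_distrib)
  then show False using pos[of "a - b"] ab(1) by simp
qed

lemma herm_form_mat_1_pos: "x \<noteq> 0 \<Longrightarrow> Re (herm_form (mat 1) x) > 0"
proof -
  assume "x \<noteq> 0"
  then obtain k where k: "x$k \<noteq> 0" by (auto simp: vec_eq_iff)
  have "Re (herm_form (mat 1) x) = (\<Sum>i\<in>UNIV. (cmod (x$i))\<^sup>2)"
    by (simp add: herm_form_def Re_sum cmod_power2 power2_eq_square[symmetric])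
  also have "\<dots> > 0"
    using k by (intro sum_pos2[of UNIV k]) auto
  finally show ?thesis .
qed

lemma herm_form_diff: "herm_form (A - B) x = herm_form A x - herm_form B x"
  by (simp add: herm_form_def matrix_vector_mult_diff_rdistrib right_diff_distrib sum_subtractf)

lemma herm_form_scaled: "herm_form (\<chi> i j. c * Q$i$j) x = c * herm_form Q x"
  by (simp add: herm_form_def matrix_vector_mult_def sum_distrib_left mult_ac)

text \<open>\<open>1 - t Q\<close> is a convex combination of \<open>1\<close> and \<open>1 - Q\<close>.\<close>

lemma positive_definite_one_minus_scaled:
  assumes pos: "\<And>x. x \<noteq> 0 \<Longrightarrow> Re (herm_form (mat 1 - Q) x) > 0"
    and t: "0 \<le> t" "t \<le> 1" and x: "x \<noteq> 0"
  shows "Re (herm_form (mat 1 - (\<chi> i j. complex_of_real t * Q$i$j)) x) > 0"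
proof -
  have one: "Re (herm_form (mat 1) x) > 0"
    using herm_form_mat_1_pos[OF x] .
  have full: "Re (herm_form (mat 1) x) - Re (herm_form Q x) > 0"
    using pos[OF x] by (simp add: herm_form_diff)
  have "Re (herm_form (mat 1 - (\<chi> i j. complex_of_real t * Q$i$j)) x)
      = (1 - t) * Re (herm_form (mat 1) x) + t * (Re (herm_form (mat 1) x) - Re (herm_form Q x))"
    by (simp add: herm_form_diff herm_form_scaled algebra_simps)
  also have "\<dots> > 0"
  proof (cases "t = 1")
    case False
    then have "(1 - t) * Re (herm_form (mat 1) x) > 0" using t one by (intro mult_pos_pos) auto
    moreover have "t * (Re (herm_form (mat 1) x) - Re (herm_form Q x)) \<ge> 0"
      using t full by (intro mult_nonneg_nonneg) auto
    ultimately show ?thesis by linarith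
  qed (use full in simp)
  finally show ?thesis .
qed

text \<open>Along \<open>t \<mapsto> det (1 - t Q)\<close>, which is real, equals \<open>1\<close> at \<open>t = 0\<close> and has no zero on
  \<open>[0, 1]\<close>, the intermediate value theorem keeps the determinant positive.\<close>

lemma det_one_minus_positive:
  fixes Q :: "complex^'n::finite^'n"
  assumes self_adjoint: "adjoint_mat Q = Q"
    and pos: "\<And>x. x \<noteq> 0 \<Longrightarrow> Re (herm_form (mat 1 - Q) x) > 0"
  shows "Im (det (mat 1 - Q)) = 0 \<and> Re (det (mat 1 - Q)) > 0"
proof -
  define H where "H = (\<lambda>t::real. mat 1 - (\<chi> i j. complex_of_real t * Q$i$j) :: complex^'n^'n)"
  have H0: "H 0 = mat 1" and H1: "H 1 = mat 1 - Q"
    by (simp_all add: H_def vec_eq_iff)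
  have real: "Im (det (H t)) = 0" for t
    using self_adjoint by (intro det_real_if_self_adjoint) (auto simp: H_def adjoint_mat_def vec_eq_iff mat_def)
  have nonzero: "det (H t) \<noteq> 0" if "0 \<le> t" "t \<le> 1" for t
    unfolding H_def using positive_definite_one_minus_scaled[OF pos that]
    by (rule det_nonzero_if_positive_definite)
  define f where "f = (\<lambda>t. Re (det (H t)))"
  have cont: "isCont f t" for t
  proof -
    have "isCont (\<lambda>t. det (H t)) t"
      unfolding H_def det_def by (simp only: vector_minus_component vec_lambda_beta) (intro continuous_intros)
    then show ?thesis unfolding f_def continuous_complex_iff by simp
  qed
  have "f 1 > 0"
  proof (rule ccontr)
    assume "\<not> f 1 > 0"
    moreover have "f 0 = 1" by (simp add: f_def H0)
    ultimately obtain t where "0 \<le> t" "t \<le> 1" "f t = 0"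
      using IVT2[of f 1 0 0] cont by auto
    then show False using nonzero real by (simp add: f_def complex_eq_iff)
  qed
  then show ?thesis using real[of 1] unfolding f_def H1 by simp
qed

theorem mainTheorem18:
  fixes z :: "complex^'n::finite^'n" and J :: nat
  assumes "z \<in> Omega" and "rank z = 2"
  shows "complex_of_real (norm_sq (area_proj J (coh_state z)))
           = det (mat 1 - adjoint_mat z ** z) * (trace (adjoint_mat z ** z) / 2) ^ J * of_nat (J + 1)"
proof -
  have transpose: "transpose z = - z" and less: "loewner_less (adjoint_mat z ** z) (mat 1)"
    using assms(1) by (auto simp: Omega_def)
  have anti: "z$b$a = - z$a$b" for a b
    using arg_cong[OF transpose, of "\<lambda>M. M$a$b"] by (simp add: transpose_def)
  obtain x y where wedge: "\<And>i j. z$i$j = x i * y j - y i * x j"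
    using antisymmetric_rank2_wedge[OF anti assms(2)] by blast
  have cubic: "(z ** adjoint_mat z ** z)$a$b = (trace (adjoint_mat z ** z) / 2) * z$a$b" for a b
    unfolding wedge_cubic[OF wedge] trace_adjoint_mul_wedge[OF wedge] by simp
  have "adjoint_mat (adjoint_mat z ** z) = adjoint_mat z ** z"
    by (simp add: vec_eq_iff matrix_matrix_mult_def adjoint_mat_def cnj_sum mult.commute)
  moreover have "v \<noteq> 0 \<Longrightarrow> Re (herm_form (mat 1 - adjoint_mat z ** z) v) > 0" for v
    using less unfolding loewner_less_def by blast
  ultimately have "Im (det (mat 1 - adjoint_mat z ** z)) = 0 \<and> Re (det (mat 1 - adjoint_mat z ** z)) > 0"
    by (rule det_one_minus_positive)
  then show ?thesis
    using norm_sq_area_proj_coh_state[OF anti cubic] by simp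
qed

end
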